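(* There exists $M>0$ independent of $n$ and $v$ such that for every $n$ and every $v\in\mathbb R^n$, $$\|v\|_\infty+\|D_nv\|_\infty\le M\big(\|v\|_{2d}+\|P_nv\|_{2d}\big).$$
   Context: Standing assumptions: $\theta,\sigma,\lambda\in PC^1[0,1]$ (piecewise $C^1$: on each interval of some finite partition of $[0,1]$ the function is the restriction of a $C^1[0,1]$ function) with $\inf_{x\in[0,1]}\theta(x)>0$; $\varphi\in C^1([0,1];C^1[0,1])$ is a kernel $\varphi(x,\tilde x)$; $\alpha_0,\beta_0,\alpha_1,\beta_1$ are real constants. Discretization: for $n\ge1$ let $h=1/(n+1)$, $r_0=\alpha_0/(3\alpha_0-2h\beta_0)$, $r_1=\alpha_1/(3\alpha_1+2h\beta_1)$, $q_0=-\beta_0/(\alpha_0-h\beta_0)$ (assumed well defined for all $n$). Define $n\times n$ matrices $\Theta_n=\mathrm{diag}(\theta(h),\dots,\theta(nh))$, $\Sigma_n=\mathrm{diag}(\sigma(h),\dots,\sigma(nh))$, $\Lambda_n=\mathrm{diag}(\lambda(h),\dots,\lambda(nh))$; $L_n=h^{-2}M$ where $M$ is tridiagonal with diagonal entries $-2$ except $M_{11}=4r_0-2$, $M_{nn}=4r_1-2$, superdiagonal entries $1$ except $M_{12}=1-r_0$, subdiagonal entries $1$ except $M_{n,n-1}=1-r_1$; $D_n=h^{-1}N$ where $N_{11}=hq_0$, $N_{1j}=0$ for $j\ge2$, and for $i\ge2$: $N_{ii}=1$, $N_{i,i-1}=-1$, other entries $0$; $\Phi_n$ is lower triangular with $(\Phi_n)_{jm}=h\varphi(jh,mh)$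 for $m\le j$. Set $P_n=\Theta_nL_n+\Sigma_nD_n+\Lambda_n+\Phi_n$. For $v\in\mathbb R^n$, $\|v\|_{2d}=\sqrt h\,\|v\|_2$ and $\|v\|_\infty=\max_j|v_j|$. *)

theory Defs
  imports "HOL-Analysis.Analysis"
begin

definition C1_01 :: "(real \<Rightarrow> real) \<Rightarrow> bool" where
  "C1_01 u \<longleftrightarrow> u C1_differentiable_on {0..1}"

text \<open>Each breakpoint belongs to one of the two adjacent intervals, so the
  value there is the value of one of the two adjacent pieces.\<close>
definition PC1 :: "(real \<Rightarrow> real) \<Rightarrow> bool" where
  "PC1 f \<longleftrightarrow> (\<exists>(xs::real list) (g::nat \<Rightarrow> real \<Rightarrow> real).
      length xs \<ge> 2 \<and> xs ! 0 = 0 \<and> last xs = 1 \<and> sorted_wrt (<) xs \<and>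
      (\<forall>i < length xs - 1. C1_01 (g i) \<and> (\<forall>x \<in> {xs ! i <..< xs ! (i+1)}. f x = g i x)) \<and>
      f 0 = g 0 0 \<and> f 1 = g (length xs - 2) 1 \<and>
      (\<forall>i. 0 < i \<and> i < length xs - 1 \<longrightarrow>
          f (xs ! i) = g (i - 1) (xs ! i) \<or> f (xs ! i) = g i (xs ! i)))"

definition c1norm :: "(real \<Rightarrow> real) \<Rightarrow> real" where
  "c1norm u = (SUP t\<in>{0..1}. \<bar>u t\<bar>) + (SUP t\<in>{0..1}. \<bar>vector_derivative u (at t within {0..1})\<bar>)"

text \<open>phi in C^1([0,1]; C^1[0,1]), where phi x = phi(x, \<cdot>): the map x \<mapsto> phi x is
  (Frechet) differentiable on [0,1] as a C^1[0,1]-valued map, with derivative psi x, and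
  x \<mapsto> psi x is continuous in the C^1[0,1] norm.\<close>
definition C1_C1 :: "(real \<Rightarrow> real \<Rightarrow> real) \<Rightarrow> bool" where
  "C1_C1 phi \<longleftrightarrow> (\<forall>x\<in>{0..1}. C1_01 (phi x)) \<and>
     (\<exists>psi. (\<forall>x\<in>{0..1}. C1_01 (psi x)) \<and>
        (\<forall>x\<in>{0..1}. ((\<lambda>y. c1norm (\<lambda>t. phi y t - phi x t - (y - x) * psi x t) / \<bar>y - x\<bar>)
                         \<longlongrightarrow> 0) (at x within {0..1})) \<and>
        (\<forall>x\<in>{0..1}. ((\<lambda>y. c1norm (\<lambda>t. psi y t - psi x t)) \<longlongrightarrow> 0) (at x within {0..1})))"

text \<open>Vectors in R^n are functions nat \<Rightarrow> real with entries indexed 1..n;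
  n \<times> n matrices are functions nat \<Rightarrow> nat \<Rightarrow> real with indices in 1..n.\<close>

definition hh :: "nat \<Rightarrow> real" where "hh n = 1 / (real n + 1)"

definition r0 :: "real \<Rightarrow> real \<Rightarrow> nat \<Rightarrow> real" where
  "r0 a0 b0 n = a0 / (3 * a0 - 2 * hh n * b0)"
definition r1 :: "real \<Rightarrow> real \<Rightarrow> nat \<Rightarrow> real" where
  "r1 a1 b1 n = a1 / (3 * a1 + 2 * hh n * b1)"
definition q0 :: "real \<Rightarrow> real \<Rightarrow> nat \<Rightarrow> real" where
  "q0 a0 b0 n = - b0 / (a0 - hh n * b0)"

text \<open>The tridiagonal matrix M (for n = 1 the single diagonal entry is taken to be 4 r_0 - 2).\<close>
definition Mmat :: "real \<Rightarrow> real \<Rightarrow> real \<Rightarrow> real \<Rightarrow> nat \<Rightarrow> nat \<Rightarrow> nat \<Rightarrow> real" where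
  "Mmat a0 b0 a1 b1 n i j =
     (if i = j then (if i = 1 then 4 * r0 a0 b0 n - 2 else if i = n then 4 * r1 a1 b1 n - 2 else -2)
      else if j = i + 1 then (if i = 1 then 1 - r0 a0 b0 n else 1)
      else if i = j + 1 then (if i = n then 1 - r1 a1 b1 n else 1)
      else 0)"

definition Lmat :: "real \<Rightarrow> real \<Rightarrow> real \<Rightarrow> real \<Rightarrow> nat \<Rightarrow> nat \<Rightarrow> nat \<Rightarrow> real" where
  "Lmat a0 b0 a1 b1 n i j = Mmat a0 b0 a1 b1 n i j / (hh n)^2"

definition Nmat :: "real \<Rightarrow> real \<Rightarrow> nat \<Rightarrow> nat \<Rightarrow> nat \<Rightarrow> real" where
  "Nmat a0 b0 n i j =
     (if i = 1 then (if j = 1 then hh n * q0 a0 b0 n else 0)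
      else if j = i then 1 else if j + 1 = i then -1 else 0)"

definition Dmat :: "real \<Rightarrow> real \<Rightarrow> nat \<Rightarrow> nat \<Rightarrow> nat \<Rightarrow> real" where
  "Dmat a0 b0 n i j = Nmat a0 b0 n i j / hh n"

definition Phimat :: "(real \<Rightarrow> real \<Rightarrow> real) \<Rightarrow> nat \<Rightarrow> nat \<Rightarrow> nat \<Rightarrow> real" where
  "Phimat phi n j m = (if m \<le> j then hh n * phi (real j * hh n) (real m * hh n) else 0)"

text \<open>P_n = Theta_n L_n + Sigma_n D_n + Lambda_n + Phi_n (diagonal matrices written out).\<close>
definition Pmat :: "(real \<Rightarrow> real) \<Rightarrow> (real \<Rightarrow> real) \<Rightarrow> (real \<Rightarrow> real) \<Rightarrow> (real \<Rightarrow> real \<Rightarrow> real)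
    \<Rightarrow> real \<Rightarrow> real \<Rightarrow> real \<Rightarrow> real \<Rightarrow> nat \<Rightarrow> nat \<Rightarrow> nat \<Rightarrow> real" where
  "Pmat theta sig lam phi a0 b0 a1 b1 n i j =
     theta (real i * hh n) * Lmat a0 b0 a1 b1 n i j
     + sig (real i * hh n) * Dmat a0 b0 n i j
     + (if i = j then lam (real i * hh n) else 0)
     + Phimat phi n i j"

definition mv :: "nat \<Rightarrow> (nat \<Rightarrow> nat \<Rightarrow> real) \<Rightarrow> (nat \<Rightarrow> real) \<Rightarrow> nat \<Rightarrow> real" where
  "mv n A v i = (\<Sum>j = 1..n. A i j * v j)"

definition norm2d :: "nat \<Rightarrow> (nat \<Rightarrow> real) \<Rightarrow> real" where
  "norm2d n v = sqrt (hh n) * sqrt (\<Sum>i = 1..n. (v i)^2)"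

definition norminf :: "nat \<Rightarrow> (nat \<Rightarrow> real) \<Rightarrow> real" where
  "norminf n v = Max ((\<lambda>i. \<bar>v i\<bar>) ` {1..n})"

end

theory Submission
  imports Defs
begin

text \<open>
  Write d = D_n v and w = P_n v. Each row i < n of L_n is a multiple of the difference quotient
  (d_(i+1) - d_i)/h: with weight 1 in the interior, and in row 1, thanks to the boundary corrections
  r_0 and q_0, with the weight 2(a_0 - h b_0)/(3 a_0 - 2 h b_0), which tends to 2/3. As theta is bounded below, row i of
  P_n v gives |d_(i+1) - d_i| <= h (K ||d||_inf + e_i), where h sum e_i is controlled by
  ||v||_2d + ||w||_2d. So over a window of length of order 1/(K+1) around the peak of |d|, d changes
  by at most ||d||_inf/4 plus that error. Unless ||d||_inf is already controlled by the error, d keeps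
  the sign of its peak with size at least ||d||_inf/2 on the window, so v is monotone there with slope
  at least ||d||_inf/2, which forces ||v||_2d to be at least a constant times ||d||_inf. Finally,
  ||v||_inf <= 2 ||v||_2d + ||d||_inf since v changes by at most h ||d||_inf per step. This proves the
  estimate for all large n; the finitely many remaining n are covered by crude finite-dimensional
  bounds.
\<close>

lemma hh_pos: "hh n > 0"
  by (simp add: hh_def)

lemma hh_times_le_1: "hh n * real n \<le> 1"
  by (simp add: hh_def field_simps)

lemma hh_times_ge_half: "n \<ge> 1 \<Longrightarrow> hh n * real n \<ge> 1/2"
  by (simp add: hh_def field_simps)

lemma grid_point_in_unit_interval: "i \<le> n \<Longrightarrow> real i * hh n \<in> {0..1}"
  by (simp add: hh_def field_simps)

lemma LIMSEQ_hh: "hh \<longlonglongrightarrow> 0"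
  unfolding hh_def using LIMSEQ_inverse_real_of_nat by (simp add: inverse_eq_divide add.commute)

lemma abs_le_norminf: "i \<in> {1..n} \<Longrightarrow> \<bar>v i\<bar> \<le> norminf n v"
  unfolding norminf_def by (rule Max_ge) auto

lemma norminf_le: "n \<ge> 1 \<Longrightarrow> (\<And>i. i \<in> {1..n} \<Longrightarrow> \<bar>v i\<bar> \<le> B) \<Longrightarrow> norminf n v \<le> B"
  unfolding norminf_def by (subst Max_le_iff) auto

lemma norminf_attained:
  assumes "n \<ge> 1"
  obtains j where "j \<in> {1..n}" "\<bar>v j\<bar> = norminf n v"
proof -
  have "norminf n v \<in> (\<lambda>i. \<bar>v i\<bar>) ` {1..n}"
    unfolding norminf_def using assms by (intro Max_in) auto
  then show ?thesis using that by force
qed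

lemma norminf_nonneg: "n \<ge> 1 \<Longrightarrow> norminf n v \<ge> 0"
  using abs_le_norminf[of 1 n v] by auto

lemma norm2d_nonneg: "norm2d n v \<ge> 0"
  unfolding norm2d_def using hh_pos[of n] by (simp add: sum_nonneg)

lemma power2_norm2d: "(norm2d n v)^2 = hh n * (\<Sum>i=1..n. (v i)^2)"
  unfolding norm2d_def using hh_pos[of n] by (simp add: power_mult_distrib sum_nonneg)

lemma hh_sum_abs_le_norm2d: "hh n * (\<Sum>i=1..n. \<bar>v i\<bar>) \<le> norm2d n v"
proof (rule power2_le_imp_le[OF _ norm2d_nonneg])
  have "(\<Sum>i=1..n. \<bar>v i\<bar>)^2 \<le> (\<Sum>i=1..n. (v i)^2) * real n"
    using sum_squared_le_sum_of_squares[of "\<lambda>i. \<bar>v i\<bar>" "{1..n}"] by simp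
  then have "(hh n * (\<Sum>i=1..n. \<bar>v i\<bar>))^2 \<le> hh n * (\<Sum>i=1..n. (v i)^2) * (hh n * real n)"
    using hh_pos[of n] by (simp add: power_mult_distrib power2_eq_square mult_left_mono)
  also have "\<dots> \<le> hh n * (\<Sum>i=1..n. (v i)^2)"
    using hh_pos[of n] hh_times_le_1[of n] by (intro mult_left_le mult_nonneg_nonneg sum_nonneg) auto
  finally show "(hh n * (\<Sum>i=1..n. \<bar>v i\<bar>))^2 \<le> (norm2d n v)^2"
    by (simp add: power2_norm2d)
qed

lemma abs_le_norm2d:
  assumes "i \<in> {1..n}"
  shows "sqrt (hh n) * \<bar>v i\<bar> \<le> norm2d n v"
proof -
  have "(v i)^2 \<le> (\<Sum>j=1..n. (v j)^2)"
    using assms by (intro member_le_sum) auto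
  then show ?thesis
    unfolding norm2d_def using hh_pos[of n] by (intro mult_left_mono real_le_rsqrt) auto
qed

section \<open>Boundedness of the coefficients\<close>

lemma sorted_nth_bracket:
  fixes xs :: "'a::linorder list"
  assumes "sorted xs" "2 \<le> length xs" "xs ! 0 \<le> x" "x \<le> last xs"
  shows "\<exists>i. Suc i < length xs \<and> xs ! i \<le> x \<and> x \<le> xs ! Suc i"
  using assms
proof (induction xs)
  case Nil
  then show ?case by simp
next
  case (Cons a ys)
  show ?case
  proof (cases "x \<le> ys ! 0")
    case True
    then show ?thesis using Cons.prems by (intro exI[of _ 0]) auto
  next
    case False
    have "2 \<le> length ys"
      using Cons.prems False by (cases ys) (auto simp: Suc_le_eq split: if_splits)
    moreover have "ys ! 0 \<le> x" "x \<le> last ys"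
      using Cons.prems False by (auto split: if_splits)
    ultimately obtain i where "Suc i < length ys" "ys ! i \<le> x" "x \<le> ys ! Suc i"
      using Cons.IH Cons.prems by auto
    then show ?thesis by (intro exI[of _ "Suc i"]) auto
  qed
qed

lemma PC1_pieces:
  assumes "PC1 f"
  obtains k :: nat and g :: "nat \<Rightarrow> real \<Rightarrow> real"
  where "\<And>i. i < k \<Longrightarrow> C1_01 (g i)" "\<And>x. x \<in> {0..1} \<Longrightarrow> \<exists>i<k. f x = g i x"
proof -
  obtain xs :: "real list" and g where
    len: "length xs \<ge> 2" and first: "xs ! 0 = 0" and final: "last xs = 1" and sorted: "sorted_wrt (<) xs"
    and pieces: "\<forall>i < length xs - 1. C1_01 (g i) \<and> (\<forall>x \<in> {xs ! i <..< xs ! (i+1)}. f x = g i x)"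
    and at0: "f 0 = g 0 0" and at1: "f 1 = g (length xs - 2) 1"
    and breaks: "\<forall>i. 0 < i \<and> i < length xs - 1 \<longrightarrow>
      f (xs ! i) = g (i - 1) (xs ! i) \<or> f (xs ! i) = g i (xs ! i)"
    using assms unfolding PC1_def by blast
  define k where "k = length xs - 1"
  have xs_k: "xs ! k = 1"
    using len final last_conv_nth[of xs] unfolding k_def by fastforce
  have at_break: "\<exists>i<k. f (xs ! j) = g i (xs ! j)" if "j \<le> k" for j
  proof -
    consider "j = 0" | "j = k" | "0 < j" "j < k" using \<open>j \<le> k\<close> by linarith
    then show ?thesis
    proof cases
      case 1 then show ?thesis using at0 first len unfolding k_def by (intro exI[of _ 0]) auto
    next
      case 2 then show ?thesis using at1 xs_k len unfolding k_def by (intro exI[of _ "length xs - 2"]) auto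
    next
      case 3 then show ?thesis using breaks unfolding k_def by (metis less_imp_diff_less)
    qed
  qed
  have "\<exists>i<k. f x = g i x" if x: "x \<in> {0..1}" for x
  proof -
    obtain i where i: "Suc i < length xs" "xs ! i \<le> x" "x \<le> xs ! Suc i"
      using sorted_nth_bracket[of xs x] strict_sorted_imp_sorted[OF sorted] len first final x
      by auto
    consider "x = xs ! i" | "x = xs ! Suc i" | "x \<in> {xs ! i <..< xs ! Suc i}"
      using i by fastforce
    then show ?thesis
    proof cases
      case 1 then show ?thesis using at_break[of i] i unfolding k_def by auto
    next
      case 2 then show ?thesis using at_break[of "Suc i"] i unfolding k_def by auto
    next
      case 3 then show ?thesis using pieces i unfolding k_def by (intro exI[of _ i]) auto
    qed
  qed
  then show ?thesis using that[of k g] pieces unfolding k_def by auto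
qed

lemma bounded_imageE:
  fixes f :: "'a \<Rightarrow> real"
  assumes "bounded (f ` S)"
  obtains B where "B \<ge> 0" "\<And>x. x \<in> S \<Longrightarrow> \<bar>f x\<bar> \<le> B"
proof -
  obtain a where a: "\<And>x. x \<in> S \<Longrightarrow> \<bar>f x\<bar> \<le> a"
    using assms unfolding bounded_real by blast
  show ?thesis
    by (rule that[of "\<bar>a\<bar>"]) (use a in force)+
qed

lemma C1_01_continuous: "C1_01 u \<Longrightarrow> continuous_on {0..1} u"
  unfolding C1_01_def by (simp add: C1_diff_imp_diff differentiable_imp_continuous_on)

lemma C1_01_bounded: "C1_01 u \<Longrightarrow> bounded (u ` {0..1})"
  by (intro compact_imp_bounded compact_continuous_image C1_01_continuous compact_Icc)

lemma C1_01_derivative_bounded: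
  assumes "C1_01 u"
  shows "bounded ((\<lambda>t. vector_derivative u (at t within {0..1})) ` {0..1})"
proof -
  obtain u' where u': "\<And>x. x \<in> {0..1} \<Longrightarrow> (u has_vector_derivative u' x) (at x)"
    and cont: "continuous_on {0..1} u'"
    using assms unfolding C1_01_def C1_differentiable_on_def by blast
  have "(\<lambda>t. vector_derivative u (at t within {0..1})) ` {0..1} = u' ` {0..1}"
    using u' by (intro image_cong refl vector_derivative_at_within_ivl) auto
  then show ?thesis
    using compact_imp_bounded[OF compact_continuous_image[OF cont compact_Icc]] by simp
qed

lemma abs_le_c1norm:
  assumes "C1_01 u" "t \<in> {0..1}"
  shows "\<bar>u t\<bar> \<le> c1norm u"
proof -
  obtain B where "B \<ge> 0" and B: "\<And>x. x \<in> {0..1} \<Longrightarrow> \<bar>u x\<bar> \<le> B"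
    by (rule bounded_imageE[OF C1_01_bounded[OF assms(1)]]) auto
  obtain B' where "B' \<ge> 0" and B': "\<And>x. x \<in> {0..1} \<Longrightarrow> \<bar>vector_derivative u (at x within {0..1})\<bar> \<le> B'"
    by (rule bounded_imageE[OF C1_01_derivative_bounded[OF assms(1)]]) auto
  have "\<bar>u t\<bar> \<le> (SUP x\<in>{0..1}. \<bar>u x\<bar>)"
    using B assms(2) by (intro cSUP_upper bdd_aboveI2) auto
  moreover have "\<bar>vector_derivative u (at 0 within {0..1})\<bar>
      \<le> (SUP x\<in>{0..1::real}. \<bar>vector_derivative u (at x within {0..1})\<bar>)"
    using B' by (intro cSUP_upper bdd_aboveI2) auto
  ultimately show ?thesis
    unfolding c1norm_def by (smt (verit))
qed

lemma PC1_bounded: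
  assumes "PC1 f"
  shows "bounded (f ` {0..1})"
proof -
  obtain k :: nat and g :: "nat \<Rightarrow> real \<Rightarrow> real" where C1: "\<And>i. i < k \<Longrightarrow> C1_01 (g i)"
    and pieces: "\<And>x. x \<in> {0..1} \<Longrightarrow> \<exists>i<k. f x = g i x"
    using PC1_pieces[OF assms] by blast
  have "f ` {0..1} \<subseteq> (\<Union>i<k. g i ` {0..1})"
    using pieces by fastforce
  moreover have "bounded (\<Union>i<k. g i ` {0..1})"
    using C1 C1_01_bounded by (intro bounded_UN) auto
  ultimately show ?thesis
    using bounded_subset by blast
qed

lemma compact_locally_bounded_imp_bounded:
  fixes b :: "'a::topological_space \<Rightarrow> 'b \<Rightarrow> real"
  assumes "compact S"
    and local: "\<And>x. x \<in> S \<Longrightarrow> \<exists>U B. open U \<and> x \<in> U \<and> (\<forall>y\<in>S \<inter> U. \<forall>t\<in>T. b y t \<le> B)"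
  shows "\<exists>B. \<forall>y\<in>S. \<forall>t\<in>T. b y t \<le> B"
proof -
  define \<U> where "\<U> = {U. open U \<and> (\<exists>B. \<forall>y\<in>S \<inter> U. \<forall>t\<in>T. b y t \<le> B)}"
  have "S \<subseteq> \<Union>\<U>"
    using local unfolding \<U>_def by blast
  moreover have "\<And>U. U \<in> \<U> \<Longrightarrow> open U"
    unfolding \<U>_def by blast
  ultimately obtain \<U>' where sub: "\<U>' \<subseteq> \<U>" and fin: "finite \<U>'" and cover: "S \<subseteq> \<Union>\<U>'"
    by (rule compactE[OF assms(1)])
  have "\<forall>U\<in>\<U>'. \<exists>B. \<forall>y\<in>S \<inter> U. \<forall>t\<in>T. b y t \<le> B"
    using sub unfolding \<U>_def by blast
  then obtain B where B: "\<And>U. U \<in> \<U>' \<Longrightarrow> \<forall>y\<in>S \<inter> U. \<forall>t\<in>T. b y t \<le> B U"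
    by (metis bchoice)
  have "b y t \<le> (\<Sum>U\<in>\<U>'. \<bar>B U\<bar>)" if "y \<in> S" "t \<in> T" for y t
  proof -
    obtain U where "U \<in> \<U>'" "y \<in> U"
      using cover \<open>y \<in> S\<close> by blast
    then have "b y t \<le> \<bar>B U\<bar>"
      using B that by force
    also have "\<dots> \<le> (\<Sum>U\<in>\<U>'. \<bar>B U\<bar>)"
      using \<open>U \<in> \<U>'\<close> fin by (intro member_le_sum) auto
    finally show ?thesis .
  qed
  then show ?thesis by blast
qed

lemma C1_C1_bounded:
  assumes "C1_C1 phi"
  shows "\<exists>B. \<forall>x\<in>{0..1}. \<forall>t\<in>{0..1}. \<bar>phi x t\<bar> \<le> B"
proof (rule compact_locally_bounded_imp_bounded[OF compact_Icc])
  obtain psi where phi: "\<forall>x\<in>{0..1}. C1_01 (phi x)" and psi: "\<forall>x\<in>{0..1}. C1_01 (psi x)"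
    and deriv: "\<forall>x\<in>{0..1}. ((\<lambda>y. c1norm (\<lambda>t. phi y t - phi x t - (y - x) * psi x t) / \<bar>y - x\<bar>)
                         \<longlongrightarrow> 0) (at x within {0..1})"
    using assms unfolding C1_C1_def by blast
  fix x :: real
  assume x: "x \<in> {0..1}"
  obtain B1 where B1: "\<And>t. t \<in> {0..1} \<Longrightarrow> \<bar>phi x t\<bar> \<le> B1"
    using phi x by (metis bounded_imageE C1_01_bounded)
  obtain B2 where "B2 \<ge> 0" and B2: "\<And>t. t \<in> {0..1} \<Longrightarrow> \<bar>psi x t\<bar> \<le> B2"
    using psi x by (metis bounded_imageE C1_01_bounded)
  have "eventually (\<lambda>y. c1norm (\<lambda>t. phi y t - phi x t - (y - x) * psi x t) / \<bar>y - x\<bar> < 1)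
      (at x within {0..1})"
    using deriv x by (intro order_tendstoD(2)) auto
  then obtain U where U: "open U" "x \<in> U"
    and close: "\<And>y. y \<in> U \<Longrightarrow> y \<noteq> x \<Longrightarrow> y \<in> {0..1} \<Longrightarrow>
      c1norm (\<lambda>t. phi y t - phi x t - (y - x) * psi x t) / \<bar>y - x\<bar> < 1"
    unfolding eventually_at_topological by blast
  have bound: "\<bar>phi y t\<bar> \<le> B1 + B2 + 1" if y: "y \<in> {0..1} \<inter> U" and t: "t \<in> {0..1}" for y t
  proof (cases "y = x")
    case True
    then show ?thesis using B1[OF t] \<open>B2 \<ge> 0\<close> by simp
  next
    case False
    define r where "r = (\<lambda>t. phi y t - phi x t - (y - x) * psi x t)"
    have "C1_01 r"
      using phi psi x y unfolding r_def C1_01_def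
      by (intro C1_differentiable_on_diff C1_differentiable_on_mult) auto
    then have "\<bar>r t\<bar> \<le> c1norm r"
      using t by (rule abs_le_c1norm)
    moreover have "c1norm r < \<bar>y - x\<bar>"
      using close[of y] y False unfolding r_def by (simp add: divide_less_eq)
    moreover have "\<bar>y - x\<bar> \<le> 1"
      using x y by auto
    moreover have "\<bar>(y - x) * psi x t\<bar> \<le> \<bar>psi x t\<bar>"
      using \<open>\<bar>y - x\<bar> \<le> 1\<close> unfolding abs_mult by (intro mult_left_le_one_le) auto
    ultimately show ?thesis
      using B1[OF t] B2[OF t] unfolding r_def by linarith
  qed
  show "\<exists>U B. open U \<and> x \<in> U \<and> (\<forall>y\<in>{0..1} \<inter> U. \<forall>t\<in>{0..1}. \<bar>phi y t\<bar> \<le> B)"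
    using U bound by (intro exI[of _ U] exI[of _ "B1 + B2 + 1"]) simp
qed

section \<open>Rows of the difference operators\<close>

lemma mv_sparse_row:
  assumes "T \<subseteq> {1..n}" "\<And>j. j \<in> {1..n} \<Longrightarrow> j \<notin> T \<Longrightarrow> A i j = 0"
  shows "mv n A v i = (\<Sum>j\<in>T. A i j * v j)"
  unfolding mv_def using assms by (intro sum.mono_neutral_right) auto

lemma mv_Dmat_first: "1 \<le> n \<Longrightarrow> mv n (Dmat a0 b0 n) v 1 = q0 a0 b0 n * v 1"
  using hh_pos[of n] by (subst mv_sparse_row[of "{1}"]) (auto simp: Dmat_def Nmat_def)

lemma mv_Dmat_interior:
  assumes "2 \<le> i" "i \<le> n"
  shows "mv n (Dmat a0 b0 n) v i = (v i - v (i - 1)) / hh n"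
  using assms by (subst mv_sparse_row[of "{i - 1, i}"])
    (auto simp: Dmat_def Nmat_def diff_divide_distrib)

lemma mv_Lmat_first:
  assumes "2 \<le> n"
  shows "mv n (Lmat a0 b0 a1 b1 n) v 1
    = ((4 * r0 a0 b0 n - 2) * v 1 + (1 - r0 a0 b0 n) * v 2) / (hh n)^2"
  using assms by (subst mv_sparse_row[of "{1, 2}"])
    (auto simp: Lmat_def Mmat_def add_divide_distrib)

lemma mv_Lmat_interior:
  assumes "2 \<le> i" "i < n"
  shows "mv n (Lmat a0 b0 a1 b1 n) v i = (v (i + 1) - 2 * v i + v (i - 1)) / (hh n)^2"
proof -
  obtain k where k: "i = Suc k" "1 \<le> k"
    using assms by (cases i) auto
  have "mv n (Lmat a0 b0 a1 b1 n) v i = (\<Sum>j\<in>{k, Suc k, Suc (Suc k)}. Lmat a0 b0 a1 b1 n i j * v j)"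
    using assms k by (intro mv_sparse_row) (auto simp: Lmat_def Mmat_def)
  then show ?thesis
    using assms k by (simp add: Lmat_def Mmat_def add_divide_distrib diff_divide_distrib)
qed

lemma boundary_row_identity:
  fixes h a b x1 x2 :: real
  assumes h: "h \<noteq> 0" and E: "3 * a - 2 * h * b \<noteq> 0" and G: "a - h * b \<noteq> 0"
  shows "((4 * (a / (3 * a - 2 * h * b)) - 2) * x1 + (1 - a / (3 * a - 2 * h * b)) * x2) / h^2
    = 2 * (a - h * b) / (3 * a - 2 * h * b) * ((x2 - x1) / h - (- b / (a - h * b)) * x1) / h"
proof -
  define e where "e = 3 * a - 2 * h * b"
  define g where "g = a - h * b"
  have "e \<noteq> 0" "g \<noteq> 0"
    using E G unfolding e_def g_def by auto
  have "(4 * a - 2 * e) * x1 + (e - a) * x2 = 2 * ((x2 - x1) * g + h * b * x1)"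
    unfolding e_def g_def by (simp add: algebra_simps)
  then show ?thesis
    using h \<open>e \<noteq> 0\<close> \<open>g \<noteq> 0\<close> unfolding e_def[symmetric] g_def[symmetric]
    by (simp add: field_simps power2_eq_square) algebra
qed

definition boundary_weight :: "real \<Rightarrow> real \<Rightarrow> nat \<Rightarrow> real" where
  "boundary_weight a0 b0 n = 2 * (a0 - hh n * b0) / (3 * a0 - 2 * hh n * b0)"

lemma mv_Lmat_eq_weighted_difference:
  assumes "1 \<le> i" "i < n" and "3 * a0 - 2 * hh n * b0 \<noteq> 0" "a0 - hh n * b0 \<noteq> 0"
  shows "mv n (Lmat a0 b0 a1 b1 n) v i
    = (if i = 1 then boundary_weight a0 b0 n else 1)
      * (mv n (Dmat a0 b0 n) v (Suc i) - mv n (Dmat a0 b0 n) v i) / hh n"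
proof (cases "i = 1")
  case True
  have "hh n \<noteq> 0"
    using hh_pos[of n] by simp
  have "mv n (Lmat a0 b0 a1 b1 n) v i = ((4 * r0 a0 b0 n - 2) * v 1 + (1 - r0 a0 b0 n) * v 2) / (hh n)^2"
    using assms True mv_Lmat_first by simp
  moreover have "mv n (Dmat a0 b0 n) v (Suc i) = (v 2 - v 1) / hh n"
    using assms True mv_Dmat_interior[of 2 n] by (simp add: numeral_2_eq_2)
  moreover have "mv n (Dmat a0 b0 n) v i = q0 a0 b0 n * v 1"
    using assms True mv_Dmat_first by simp
  ultimately show ?thesis
    using True boundary_row_identity[OF \<open>hh n \<noteq> 0\<close> assms(3,4), of "v 1" "v 2"]
    by (simp add: r0_def q0_def boundary_weight_def)
next
  case False
  then show ?thesis
    using assms hh_pos[of n]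
    by (simp add: mv_Lmat_interior mv_Dmat_interior field_simps power2_eq_square)
qed

lemma mv_Pmat:
  assumes "i \<in> {1..n}"
  shows "mv n (Pmat theta sig lam phi a0 b0 a1 b1 n) v i
    = theta (real i * hh n) * mv n (Lmat a0 b0 a1 b1 n) v i
      + sig (real i * hh n) * mv n (Dmat a0 b0 n) v i
      + lam (real i * hh n) * v i + mv n (Phimat phi n) v i"
proof -
  have "(\<Sum>j=1..n. (if i = j then lam (real i * hh n) else 0) * v j)
      = (\<Sum>j=1..n. if i = j then lam (real i * hh n) * v j else 0)"
    by (intro sum.cong) auto
  then show ?thesis
    using assms unfolding mv_def Pmat_def by (simp add: distrib_right sum.distrib sum_distrib_left mult.assoc)
qed

lemma abs_mv_Phimat_le:
  assumes B: "\<forall>x\<in>{0..1}. \<forall>t\<in>{0..1}. \<bar>phi x t\<bar> \<le> B" and "i \<in> {1..n}"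
  shows "\<bar>mv n (Phimat phi n) v i\<bar> \<le> B * norm2d n v"
proof -
  have "B \<ge> 0"
    using B by force
  have "\<bar>mv n (Phimat phi n) v i\<bar> \<le> (\<Sum>j=1..n. \<bar>Phimat phi n i j\<bar> * \<bar>v j\<bar>)"
    unfolding mv_def abs_mult[symmetric] by (rule sum_abs)
  also have "\<dots> \<le> (\<Sum>j=1..n. hh n * B * \<bar>v j\<bar>)"
  proof (intro sum_mono mult_right_mono)
    fix j assume "j \<in> {1..n}"
    then show "\<bar>Phimat phi n i j\<bar> \<le> hh n * B"
      using B \<open>B \<ge> 0\<close> hh_pos[of n] grid_point_in_unit_interval[of i n] grid_point_in_unit_interval[of j n]
        \<open>i \<in> {1..n}\<close>
      unfolding Phimat_def by (auto simp: abs_mult intro: mult_left_mono)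
  qed simp
  also have "\<dots> = B * (hh n * (\<Sum>j=1..n. \<bar>v j\<bar>))"
    by (simp add: sum_distrib_left algebra_simps)
  also have "\<dots> \<le> B * norm2d n v"
    using hh_sum_abs_le_norm2d \<open>B \<ge> 0\<close> by (rule mult_left_mono)
  finally show ?thesis .
qed

section \<open>A discrete estimate for difference quotients\<close>

lemma abs_diff_le_sum_increments:
  fixes f :: "nat \<Rightarrow> real"
  assumes "i \<le> j" "\<And>k. i \<le> k \<Longrightarrow> k < j \<Longrightarrow> \<bar>f (Suc k) - f k\<bar> \<le> b k"
  shows "\<bar>f j - f i\<bar> \<le> (\<Sum>k=i..<j. b k)"
proof -
  have "\<bar>f j - f i\<bar> = \<bar>\<Sum>k=i..<j. f (Suc k) - f k\<bar>"
    using sum_Suc_diff'[OF assms(1), of f] by simp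
  also have "\<dots> \<le> (\<Sum>k=i..<j. \<bar>f (Suc k) - f k\<bar>)"
    by (rule sum_abs)
  also have "\<dots> \<le> (\<Sum>k=i..<j. b k)"
    using assms(2) by (intro sum_mono) auto
  finally show ?thesis .
qed

lemma diff_ge_of_increments_ge:
  fixes f :: "nat \<Rightarrow> real"
  assumes "i \<le> j" "\<And>k. i \<le> k \<Longrightarrow> k < j \<Longrightarrow> b \<le> f (Suc k) - f k"
  shows "real (j - i) * b \<le> f j - f i"
proof -
  have "real (j - i) * b = (\<Sum>k=i..<j. b)"
    by simp
  also have "\<dots> \<le> (\<Sum>k=i..<j. f (Suc k) - f k)"
    using assms(2) by (intro sum_mono) auto
  also have "\<dots> = f j - f i"
    using sum_Suc_diff'[OF assms(1), of f] by simp
  finally show ?thesis .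
qed

lemma norm2d_lower_bound_from_spread:
  fixes v :: "nat \<Rightarrow> real"
  assumes "1 \<le> a" "a + m \<le> n" "\<delta> \<ge> 0"
    and spread: "\<And>k l. a \<le> k \<Longrightarrow> k \<le> l \<Longrightarrow> l \<le> a + m \<Longrightarrow> real (l - k) * \<delta> \<le> \<bar>v l - v k\<bar>"
  shows "hh n * real m ^ 3 * \<delta>^2 \<le> 108 * (norm2d n v)^2"
proof -
  define p where "p = m div 3"
  define t where "t = real m * \<delta> / 6"
  have "t \<ge> 0"
    using assms(3) unfolding t_def by simp
  have pair: "2 * t \<le> \<bar>v k\<bar> + \<bar>v l\<bar>" if "k \<in> {a..a+p}" "l \<in> {a+m-p..a+m}" for k l
  proof -
    have "k \<le> l" "real m \<le> 3 * real (l - k)"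
      using that unfolding p_def by auto
    then have "real m * \<delta> \<le> 3 * real (l - k) * \<delta>"
      using assms(3) by (intro mult_right_mono)
    then have "2 * t \<le> real (l - k) * \<delta>"
      unfolding t_def by (simp add: algebra_simps)
    also have "\<dots> \<le> \<bar>v l - v k\<bar>"
      using that \<open>k \<le> l\<close> by (intro spread) auto
    finally show ?thesis by simp
  qed
  obtain S where S: "S \<subseteq> {1..n}" "card S = p + 1" "\<And>k. k \<in> S \<Longrightarrow> t \<le> \<bar>v k\<bar>"
  proof (cases "\<forall>k\<in>{a..a+p}. t \<le> \<bar>v k\<bar>")
    case True
    then show ?thesis
      using that[of "{a..a+p}"] assms(1,2) unfolding p_def by auto
  next
    case False
    then obtain k where "k \<in> {a..a+p}" "\<bar>v k\<bar> < t"
      by auto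
    then have "\<forall>l\<in>{a+m-p..a+m}. t \<le> \<bar>v l\<bar>"
      using pair by force
    then show ?thesis
      using that[of "{a+m-p..a+m}"] assms(1,2) unfolding p_def by auto
  qed
  have "m \<le> 3 * (p + 1)"
    unfolding p_def by presburger
  then have "real m \<le> 3 * real (p + 1)"
    by linarith
  then have "hh n * real m ^ 3 * \<delta>^2 = 108 * (hh n * (real m / 3 * t^2))"
    unfolding t_def by (simp add: power2_eq_square power3_eq_cube)
  also have "\<dots> \<le> 108 * (hh n * (real (p + 1) * t^2))"
    using \<open>real m \<le> 3 * real (p + 1)\<close> hh_pos[of n] by (intro mult_left_mono mult_right_mono) auto
  also have "real (p + 1) * t^2 = (\<Sum>k\<in>S. t^2)"
    using S(2) by simp
  also have "\<dots> \<le> (\<Sum>k\<in>S. (v k)^2)"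
    using S(3) \<open>t \<ge> 0\<close> by (intro sum_mono) (metis abs_le_square_iff abs_of_nonneg)
  also have "\<dots> \<le> (\<Sum>k=1..n. (v k)^2)"
    using S(1) by (intro sum_mono2) auto
  finally show ?thesis
    using hh_pos[of n] by (simp add: power2_norm2d mult_left_mono)
qed

lemma norminf_le_norm2d_of_increments:
  assumes "n \<ge> 1" "D \<ge> 0" and incr: "\<And>k. 1 \<le> k \<Longrightarrow> k < n \<Longrightarrow> \<bar>v (Suc k) - v k\<bar> \<le> hh n * D"
  shows "norminf n v \<le> 2 * norm2d n v + D"
proof (rule norminf_le[OF assms(1)])
  have oscillation: "\<bar>v j - v i\<bar> \<le> D" if "1 \<le> i" "i \<le> j" "j \<le> n" for i j
  proof -
    have "\<bar>v j - v i\<bar> \<le> (\<Sum>k=i..<j. hh n * D)"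
      using that incr by (intro abs_diff_le_sum_increments) auto
    also have "\<dots> \<le> real n * hh n * D"
      using that hh_pos[of n] assms(2) by (simp add: mult_right_mono)
    also have "\<dots> \<le> D"
      using hh_times_le_1[of n] assms(2) by (simp add: mult_left_le mult.commute)
    finally show ?thesis .
  qed
  fix i assume i: "i \<in> {1..n}"
  have "real n * \<bar>v i\<bar> = (\<Sum>j=1..n. \<bar>v i\<bar>)"
    by simp
  also have "\<dots> \<le> (\<Sum>j=1..n. \<bar>v j\<bar> + D)"
  proof (rule sum_mono)
    fix j assume j: "j \<in> {1..n}"
    have "\<bar>v j - v i\<bar> \<le> D"
      using oscillation[of i j] oscillation[of j i] i j by (cases "i \<le> j") (auto simp: abs_minus_commute)
    then show "\<bar>v i\<bar> \<le> \<bar>v j\<bar> + D"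
      by linarith
  qed
  finally have "real n * \<bar>v i\<bar> \<le> (\<Sum>j=1..n. \<bar>v j\<bar>) + real n * D"
    by (simp add: sum.distrib)
  then have "hh n * (real n * \<bar>v i\<bar>) \<le> hh n * ((\<Sum>j=1..n. \<bar>v j\<bar>) + real n * D)"
    using hh_pos[of n] by (intro mult_left_mono) auto
  then have "hh n * real n * \<bar>v i\<bar> \<le> hh n * (\<Sum>j=1..n. \<bar>v j\<bar>) + hh n * real n * D"
    by (simp add: algebra_simps)
  also have "\<dots> \<le> norm2d n v + hh n * real n * D"
    using hh_sum_abs_le_norm2d by simp
  also have "norm2d n v \<le> hh n * real n * (2 * norm2d n v)"
    using hh_times_ge_half[OF assms(1)] norm2d_nonneg[of n v]
      mult_right_mono[of "1/2" "hh n * real n" "2 * norm2d n v"] by simp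
  finally have "hh n * real n * \<bar>v i\<bar> \<le> hh n * real n * (2 * norm2d n v + D)"
    by (simp add: algebra_simps)
  moreover have "hh n * real n > 0"
    using hh_times_ge_half[OF assms(1)] by linarith
  ultimately show "\<bar>v i\<bar> \<le> 2 * norm2d n v + D"
    by (rule mult_left_le_imp_le)
qed

lemma grid_window:
  assumes "0 < \<eta>" "\<eta> \<le> 1/4" "2 * hh n \<le> \<eta>"
  obtains m where "\<eta> / 2 \<le> real m * hh n" "real m * hh n \<le> \<eta>" "2 * m \<le> n"
proof
  define m where "m = nat \<lfloor>\<eta> / hh n\<rfloor>"
  have h: "hh n > 0"
    by (rule hh_pos)
  have "2 \<le> \<eta> / hh n"
    using assms(3) h by (simp add: le_divide_eq)
  then have m_bounds: "\<eta> / hh n - 1 \<le> real m" "real m \<le> \<eta> / hh n"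
    unfolding m_def by linarith+
  then show "real m * hh n \<le> \<eta>"
    using h by (simp add: le_divide_eq)
  show "\<eta> / 2 \<le> real m * hh n"
    using m_bounds \<open>2 \<le> \<eta> / hh n\<close> h by (simp add: field_simps)
  have "real m * hh n \<le> 1/4"
    using \<open>real m * hh n \<le> \<eta>\<close> assms(2) by linarith
  then have "4 * real m \<le> real n + 1"
    by (simp add: hh_def field_simps)
  then have "4 * m \<le> n + 1"
    by linarith
  then show "2 * m \<le> n"
    by arith
qed

lemma abs_diff_le_of_step_bound:
  fixes d e :: "nat \<Rightarrow> real"
  assumes step: "\<And>k. 1 \<le> k \<Longrightarrow> k < n \<Longrightarrow> \<bar>d (Suc k) - d k\<bar> \<le> hh n * (K * D + e k)"
    and e: "\<And>k. e k \<ge> 0" "hh n * (\<Sum>k=1..n. e k) \<le> F"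
    and "1 \<le> i" "i \<le> j" "j \<le> n"
  shows "\<bar>d j - d i\<bar> \<le> real (j - i) * (hh n * K * D) + F"
proof -
  have "\<bar>d j - d i\<bar> \<le> (\<Sum>k=i..<j. hh n * (K * D + e k))"
    using assms by (intro abs_diff_le_sum_increments step) auto
  also have "\<dots> = real (j - i) * (hh n * K * D) + hh n * (\<Sum>k=i..<j. e k)"
    by (simp add: sum.distrib sum_distrib_left algebra_simps)
  also have "hh n * (\<Sum>k=i..<j. e k) \<le> hh n * (\<Sum>k=1..n. e k)"
    using assms hh_pos[of n] by (intro mult_left_mono sum_mono2) auto
  finally show ?thesis
    using e(2) by simp
qed

lemma sgn_peak_times_near_peak:
  fixes d e :: "nat \<Rightarrow> real"
  assumes step: "\<And>k. 1 \<le> k \<Longrightarrow> k < n \<Longrightarrow> \<bar>d (Suc k) - d k\<bar> \<le> hh n * (K * norminf n d + e k)"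
    and e: "\<And>k. e k \<ge> 0" "hh n * (\<Sum>k=1..n. e k) \<le> F"
    and "K \<ge> 0" "F < norminf n d / 4" "real m * hh n * K \<le> 1/4"
    and peak: "j \<in> {1..n}" "\<bar>d j\<bar> = norminf n d"
    and near: "i \<in> {1..n}" "i \<le> j + m" "j \<le> i + m"
  shows "norminf n d / 2 < sgn (d j) * d i"
proof -
  define D where "D = norminf n d"
  have "F \<ge> 0"
    using e hh_pos[of n] by (meson order_trans mult_nonneg_nonneg sum_nonneg less_imp_le)
  then have "D > 0"
    using \<open>F < norminf n d / 4\<close> unfolding D_def by linarith
  have "\<bar>d i - d j\<bar> \<le> real (max i j - min i j) * (hh n * K * D) + F"
    using abs_diff_le_of_step_bound[OF step[unfolded D_def[symmetric]] e, of "min i j" "max i j"]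
      peak near by (cases "i \<le> j") (auto simp: abs_minus_commute)
  also have "\<dots> \<le> real m * hh n * K * D + F"
    using near hh_pos[of n] \<open>K \<ge> 0\<close> \<open>D > 0\<close>
    by (simp add: mult.assoc mult_right_mono del: of_nat_diff)
  also have "real m * hh n * K * D \<le> D / 4"
    using mult_right_mono[OF \<open>real m * hh n * K \<le> 1/4\<close>, of D] \<open>D > 0\<close> by simp
  finally have "\<bar>d i - d j\<bar> < D / 2"
    using \<open>F < norminf n d / 4\<close> unfolding D_def by linarith
  moreover have "sgn (d j) * d i = D + sgn (d j) * (d i - d j)"
    using peak unfolding D_def by (simp add: algebra_simps abs_sgn)
  moreover have "\<bar>sgn (d j) * (d i - d j)\<bar> = \<bar>d i - d j\<bar>"
    using peak \<open>D > 0\<close> unfolding D_def by (auto simp: abs_mult abs_sgn_eq)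
  ultimately show ?thesis
    unfolding D_def by linarith
qed

lemma spread_near_peak:
  fixes v d e :: "nat \<Rightarrow> real"
  assumes step: "\<And>k. 1 \<le> k \<Longrightarrow> k < n \<Longrightarrow> \<bar>d (Suc k) - d k\<bar> \<le> hh n * (K * norminf n d + e k)"
    and e: "\<And>k. e k \<ge> 0" "hh n * (\<Sum>k=1..n. e k) \<le> F"
    and "K \<ge> 0" "F < norminf n d / 4" "real m * hh n * K \<le> 1/4" "2 * m \<le> n" "n \<ge> 1"
    and dv: "\<And>k. 2 \<le> k \<Longrightarrow> k \<le> n \<Longrightarrow> d k = (v k - v (k - 1)) / hh n"
  obtains a where "1 \<le> a" "a + m \<le> n"
    "\<And>k l. a \<le> k \<Longrightarrow> k \<le> l \<Longrightarrow> l \<le> a + m \<Longrightarrow>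
      real (l - k) * (hh n * norminf n d / 2) \<le> \<bar>v l - v k\<bar>"
proof -
  obtain j where j: "j \<in> {1..n}" "\<bar>d j\<bar> = norminf n d"
    using norminf_attained[OF \<open>n \<ge> 1\<close>] by blast
  obtain a where a: "1 \<le> a" "a + m \<le> n" "a \<le> j" "j \<le> a + m"
  proof (cases "j + m \<le> n")
    case True
    then show ?thesis using that[of j] j by auto
  next
    case False
    then show ?thesis using that[of "j - m"] j \<open>2 * m \<le> n\<close> by auto
  qed
  define s where "s = sgn (d j)"
  have "\<bar>s\<bar> \<le> 1"
    unfolding s_def by (simp add: abs_sgn_eq)
  have "real (l - k) * (hh n * norminf n d / 2) \<le> \<bar>v l - v k\<bar>"
    if "a \<le> k" "k \<le> l" "l \<le> a + m" for k l
  proof -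
    have "real (l - k) * (hh n * norminf n d / 2) \<le> s * v l - s * v k"
    proof (rule diff_ge_of_increments_ge[where f = "\<lambda>k. s * v k", OF \<open>k \<le> l\<close>])
      fix q assume "k \<le> q" "q < l"
      then have "v (Suc q) - v q = hh n * d (Suc q)"
        using dv[of "Suc q"] that a hh_pos[of n] by simp
      then have "s * v (Suc q) - s * v q = hh n * (s * d (Suc q))"
        by (metis right_diff_distrib mult.left_commute)
      moreover have "norminf n d / 2 < s * d (Suc q)"
        unfolding s_def using \<open>k \<le> q\<close> \<open>q < l\<close> that a j
        by (intro sgn_peak_times_near_peak[OF step e assms(4-6)]) auto
      ultimately show "hh n * norminf n d / 2 \<le> s * v (Suc q) - s * v q"
        using hh_pos[of n] by simp
    qed
    also have "\<dots> \<le> \<bar>s\<bar> * \<bar>v l - v k\<bar>"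
      unfolding right_diff_distrib[symmetric] abs_mult[symmetric] by (rule abs_ge_self)
    also have "\<dots> \<le> \<bar>v l - v k\<bar>"
      using \<open>\<bar>s\<bar> \<le> 1\<close> by (intro mult_left_le_one_le) auto
    finally show ?thesis .
  qed
  then show ?thesis
    using that a(1,2) by blast
qed

lemma le_of_cubic_window_bound:
  fixes K x D V :: real
  assumes "K \<ge> 0" "V \<ge> 0" "1 / (8 * (K + 1)) \<le> x" "x^3 * D^2 \<le> 432 * V^2"
  shows "D \<le> 512 * (K + 1)^2 * V"
proof (rule power2_le_imp_le)
  have "(1 / (8 * (K + 1)))^3 = 1 / (512 * (K + 1)^3)"
    by (simp add: power_divide power3_eq_cube algebra_simps)
  then have "D^2 = 512 * (K + 1)^3 * ((1 / (8 * (K + 1)))^3 * D^2)"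
    using assms(1) by simp
  also have "\<dots> \<le> 512 * (K + 1)^3 * (x^3 * D^2)"
    using assms(1,3) by (intro mult_left_mono mult_right_mono power_mono) auto
  also have "\<dots> \<le> 512 * (K + 1)^3 * 432 * V^2"
    using mult_left_mono[OF assms(4), of "512 * (K + 1)^3"] assms(1) by (simp add: mult.assoc)
  also have "\<dots> \<le> 512 * 512 * (K + 1)^4 * V^2"
  proof -
    have "(K + 1)^3 \<le> (K + 1)^4" "0 \<le> (K + 1)^3"
      using assms(1) by (auto intro: power_increasing)
    then have "512 * (K + 1)^3 * 432 \<le> 512 * 512 * (K + 1)^4"
      by linarith
    then show ?thesis
      by (rule mult_right_mono) simp
  qed
  also have "\<dots> = (512 * (K + 1)^2 * V)^2"
    by (simp add: power_mult_distrib flip: power_mult)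
  finally show "D^2 \<le> (512 * (K + 1)^2 * V)^2" .
  show "0 \<le> 512 * (K + 1)^2 * V"
    using assms(1,2) by simp
qed

lemma norminf_le_of_step_bound:
  fixes v d e :: "nat \<Rightarrow> real"
  assumes K: "K \<ge> 0" and n: "8 * (K + 1) \<le> real n + 1"
    and step: "\<And>k. 1 \<le> k \<Longrightarrow> k < n \<Longrightarrow> \<bar>d (Suc k) - d k\<bar> \<le> hh n * (K * norminf n d + e k)"
    and e: "\<And>k. e k \<ge> 0" "hh n * (\<Sum>k=1..n. e k) \<le> F"
    and dv: "\<And>k. 2 \<le> k \<Longrightarrow> k \<le> n \<Longrightarrow> d k = (v k - v (k - 1)) / hh n"
  shows "norminf n d \<le> 4 * F + 512 * (K + 1)^2 * norm2d n v"
proof -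
  define D where "D = norminf n d"
  define h where "h = hh n"
  define V where "V = norm2d n v"
  have "h > 0" "V \<ge> 0" "n \<ge> 1"
    using hh_pos norm2d_nonneg n K unfolding h_def V_def by auto
  have "F \<ge> 0"
    using e hh_pos[of n] by (meson order_trans mult_nonneg_nonneg sum_nonneg less_imp_le)
  show ?thesis
  proof (cases "D \<le> 4 * F")
    case True
    moreover have "0 \<le> 512 * (K + 1)^2 * V"
      using \<open>V \<ge> 0\<close> K by simp
    ultimately show ?thesis
      unfolding D_def V_def by linarith
  next
    case False
    with \<open>F \<ge> 0\<close> have "F < D / 4" "D > 0"
      by auto
    define \<eta> where "\<eta> = 1 / (4 * (K + 1))"
    have "0 < \<eta>" "\<eta> \<le> 1/4" "\<eta> * K \<le> 1/4"
      using K unfolding \<eta>_def by (auto simp: field_simps)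
    moreover have "2 * h \<le> \<eta>"
      using n K unfolding \<eta>_def h_def hh_def by (simp add: field_simps)
    ultimately obtain m where m: "\<eta> / 2 \<le> real m * h" "real m * h \<le> \<eta>" "2 * m \<le> n"
      using grid_window[of \<eta> n] unfolding h_def by blast
    have "real m * h * K \<le> 1/4"
      using mult_right_mono[OF m(2) K] \<open>\<eta> * K \<le> 1/4\<close> by linarith
    then obtain a where "1 \<le> a" "a + m \<le> n"
      and spread: "\<And>k l. a \<le> k \<Longrightarrow> k \<le> l \<Longrightarrow> l \<le> a + m \<Longrightarrow>
        real (l - k) * (h * D / 2) \<le> \<bar>v l - v k\<bar>"
      using spread_near_peak[OF step e K _ _ m(3) \<open>n \<ge> 1\<close> dv] \<open>F < D / 4\<close>
      unfolding D_def h_def by blast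
    have "h * real m ^ 3 * (h * D / 2)^2 \<le> 108 * V^2"
      using norm2d_lower_bound_from_spread[OF \<open>1 \<le> a\<close> \<open>a + m \<le> n\<close> _ spread] \<open>h > 0\<close> \<open>D > 0\<close>
      unfolding h_def V_def by simp
    then have "(real m * h)^3 * D^2 \<le> 432 * V^2"
      by (simp add: power2_eq_square power3_eq_cube algebra_simps)
    moreover have "1 / (8 * (K + 1)) \<le> real m * h"
      using m(1) unfolding \<eta>_def by simp
    ultimately have "D \<le> 512 * (K + 1)^2 * V"
      using le_of_cubic_window_bound K \<open>V \<ge> 0\<close> by blast
    then show ?thesis
      using \<open>F \<ge> 0\<close> unfolding D_def V_def by simp
  qed
qed

lemma norminf_add_norminf_le_of_step_bound:
  fixes v d e :: "nat \<Rightarrow> real"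
  assumes K: "K \<ge> 0" and n: "8 * (K + 1) \<le> real n + 1"
    and step: "\<And>k. 1 \<le> k \<Longrightarrow> k < n \<Longrightarrow> \<bar>d (Suc k) - d k\<bar> \<le> hh n * (K * norminf n d + e k)"
    and e: "\<And>k. e k \<ge> 0" "hh n * (\<Sum>k=1..n. e k) \<le> F"
    and dv: "\<And>k. 2 \<le> k \<Longrightarrow> k \<le> n \<Longrightarrow> d k = (v k - v (k - 1)) / hh n"
  shows "norminf n v + norminf n d \<le> 8 * F + (1024 * (K + 1)^2 + 2) * norm2d n v"
proof -
  have "n \<ge> 1"
    using n K by simp
  have "\<bar>v (Suc k) - v k\<bar> \<le> hh n * norminf n d" if "1 \<le> k" "k < n" for k
  proof -
    have "v (Suc k) - v k = hh n * d (Suc k)"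
      using dv[of "Suc k"] that hh_pos[of n] by simp
    then show ?thesis
      using abs_le_norminf[of "Suc k" n d] that hh_pos[of n] by (simp add: abs_mult)
  qed
  then have "norminf n v \<le> 2 * norm2d n v + norminf n d"
    using norminf_le_norm2d_of_increments[OF \<open>n \<ge> 1\<close> norminf_nonneg[OF \<open>n \<ge> 1\<close>]] by blast
  with norminf_le_of_step_bound[OF K n step e dv] show ?thesis
    by (simp add: distrib_right)
qed

section \<open>The estimate on fine grids\<close>

lemma abs_increment_mv_Dmat_le:
  fixes theta sig lam :: "real \<Rightarrow> real" and phi :: "real \<Rightarrow> real \<Rightarrow> real"
    and a0 b0 a1 b1 :: real and n :: nat and v :: "nat \<Rightarrow> real"
  defines "d \<equiv> mv n (Dmat a0 b0 n) v" and "w \<equiv> mv n (Pmat theta sig lam phi a0 b0 a1 b1 n) v"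
  assumes Th: "Th > 0" "\<forall>x\<in>{0..1}. Th \<le> theta x"
    and Sb: "\<forall>x\<in>{0..1}. \<bar>sig x\<bar> \<le> Sb" and Lb: "\<forall>x\<in>{0..1}. \<bar>lam x\<bar> \<le> Lb"
    and Pb: "\<forall>x\<in>{0..1}. \<forall>t\<in>{0..1}. \<bar>phi x t\<bar> \<le> Pb"
    and weight: "1/2 \<le> boundary_weight a0 b0 n"
    and nonzero: "3 * a0 - 2 * hh n * b0 \<noteq> 0" "a0 - hh n * b0 \<noteq> 0"
    and i: "1 \<le> i" "i < n"
  shows "\<bar>d (Suc i) - d i\<bar>
    \<le> hh n * (2 * Sb / Th * norminf n d + 2 / Th * (\<bar>w i\<bar> + Lb * \<bar>v i\<bar> + Pb * norm2d n v))"
proof -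
  define h where "h = hh n"
  define c where "c = (if i = 1 then boundary_weight a0 b0 n else 1)"
  define x where "x = real i * h"
  have "h > 0" "c \<ge> 1/2"
    using hh_pos weight unfolding h_def c_def by auto
  have x: "x \<in> {0..1}"
    using grid_point_in_unit_interval[of i n] i unfolding x_def h_def by simp
  have "i \<in> {1..n}"
    using i by simp
  have "Th \<le> theta x"
    using Th(2) x by blast
  have row: "theta x * (c * (d (Suc i) - d i) / h)
      = w i - sig x * d i - lam x * v i - mv n (Phimat phi n) v i"
    using mv_Pmat[OF \<open>i \<in> {1..n}\<close>] mv_Lmat_eq_weighted_difference[OF i nonzero]
    unfolding w_def d_def x_def h_def c_def by simp
  have "\<bar>theta x * (c * (d (Suc i) - d i) / h)\<bar>
      \<le> \<bar>w i\<bar> + \<bar>sig x * d i\<bar> + \<bar>lam x * v i\<bar> + \<bar>mv n (Phimat phi n) v i\<bar>"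
    unfolding row using abs_triangle_ineq4[of "w i - sig x * d i - lam x * v i" "mv n (Phimat phi n) v i"]
      abs_triangle_ineq4[of "w i - sig x * d i" "lam x * v i"] abs_triangle_ineq4[of "w i" "sig x * d i"]
    by linarith
  moreover have "\<bar>theta x * (c * (d (Suc i) - d i) / h)\<bar> = theta x * c * \<bar>d (Suc i) - d i\<bar> / h"
    using Th(1) \<open>Th \<le> theta x\<close> \<open>c \<ge> 1/2\<close> \<open>h > 0\<close> by (simp add: abs_mult)
  moreover have "\<bar>sig x * d i\<bar> \<le> Sb * norminf n d"
    using Sb x abs_le_norminf[OF \<open>i \<in> {1..n}\<close>, of d] unfolding abs_mult
    by (intro mult_mono) auto
  moreover have "\<bar>lam x * v i\<bar> \<le> Lb * \<bar>v i\<bar>"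
    using Lb x unfolding abs_mult by (intro mult_right_mono) auto
  moreover have "\<bar>mv n (Phimat phi n) v i\<bar> \<le> Pb * norm2d n v"
    using abs_mv_Phimat_le[OF Pb \<open>i \<in> {1..n}\<close>] .
  ultimately have "theta x * c * \<bar>d (Suc i) - d i\<bar> / h
      \<le> \<bar>w i\<bar> + Sb * norminf n d + Lb * \<bar>v i\<bar> + Pb * norm2d n v"
    by linarith
  moreover have "Th / 2 * \<bar>d (Suc i) - d i\<bar> \<le> theta x * c * \<bar>d (Suc i) - d i\<bar>"
    using Th(1) \<open>Th \<le> theta x\<close> \<open>c \<ge> 1/2\<close> mult_mono[of Th "theta x" "1/2" c]
    by (intro mult_right_mono) auto
  ultimately have "Th / 2 * \<bar>d (Suc i) - d i\<bar>
      \<le> h * (\<bar>w i\<bar> + Sb * norminf n d + Lb * \<bar>v i\<bar> + Pb * norm2d n v)"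
    using \<open>h > 0\<close> by (simp add: divide_le_eq mult.commute)
  then show ?thesis
    using Th unfolding h_def by (simp add: field_simps)
qed

lemma stability_estimate_fine_grid:
  fixes theta sig lam :: "real \<Rightarrow> real" and phi :: "real \<Rightarrow> real \<Rightarrow> real"
  assumes Th: "Th > 0" "\<forall>x\<in>{0..1}. Th \<le> theta x"
    and Sb: "\<forall>x\<in>{0..1}. \<bar>sig x\<bar> \<le> Sb" and Lb: "\<forall>x\<in>{0..1}. \<bar>lam x\<bar> \<le> Lb"
    and Pb: "\<forall>x\<in>{0..1}. \<forall>t\<in>{0..1}. \<bar>phi x t\<bar> \<le> Pb"
    and n: "8 * (2 * Sb / Th + 1) \<le> real n + 1"
    and weight: "1/2 \<le> boundary_weight a0 b0 n"
    and nonzero: "3 * a0 - 2 * hh n * b0 \<noteq> 0" "a0 - hh n * b0 \<noteq> 0"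
  shows "norminf n v + norminf n (mv n (Dmat a0 b0 n) v)
    \<le> (16 / Th * (1 + Lb + Pb) + 1024 * (2 * Sb / Th + 1)^2 + 2)
        * (norm2d n v + norm2d n (mv n (Pmat theta sig lam phi a0 b0 a1 b1 n) v))"
proof -
  define d where "d = mv n (Dmat a0 b0 n) v"
  define w where "w = mv n (Pmat theta sig lam phi a0 b0 a1 b1 n) v"
  define K where "K = 2 * Sb / Th"
  define V where "V = norm2d n v"
  define W where "W = norm2d n w"
  define e where "e i = 2 / Th * (\<bar>w i\<bar> + Lb * \<bar>v i\<bar> + Pb * V)" for i
  define F where "F = 2 / Th * (W + Lb * V + Pb * V)"
  have "Sb \<ge> 0" "Lb \<ge> 0" "Pb \<ge> 0"
    using Sb Lb Pb by force+
  have "K \<ge> 0" "V \<ge> 0" "W \<ge> 0"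
    using Th \<open>Sb \<ge> 0\<close> norm2d_nonneg unfolding K_def V_def W_def by auto
  have nK: "8 * (K + 1) \<le> real n + 1"
    using n unfolding K_def .
  have step: "\<bar>d (Suc i) - d i\<bar> \<le> hh n * (K * norminf n d + e i)" if "1 \<le> i" "i < n" for i
    using abs_increment_mv_Dmat_le[OF Th Sb Lb Pb weight nonzero that, where ?a1.0 = a1 and ?b1.0 = b1 and v = v]
    unfolding d_def w_def K_def e_def V_def by (simp add: algebra_simps)
  have "e i \<ge> 0" for i
    using Th \<open>Lb \<ge> 0\<close> \<open>Pb \<ge> 0\<close> \<open>V \<ge> 0\<close> unfolding e_def by simp
  have "hh n * (\<Sum>i=1..n. e i)
      = 2 / Th * (hh n * (\<Sum>i=1..n. \<bar>w i\<bar>) + Lb * (hh n * (\<Sum>i=1..n. \<bar>v i\<bar>)) + Pb * V * (hh n * real n))"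
    unfolding e_def by (simp add: sum.distrib sum_distrib_left algebra_simps)
  also have "\<dots> \<le> F"
    unfolding F_def using Th \<open>Lb \<ge> 0\<close> \<open>Pb \<ge> 0\<close> \<open>V \<ge> 0\<close> hh_times_le_1[of n]
      hh_sum_abs_le_norm2d[of n w] hh_sum_abs_le_norm2d[of n v] unfolding V_def W_def
    by (intro mult_left_mono add_mono mult_left_le) auto
  finally have "hh n * (\<Sum>i=1..n. e i) \<le> F" .
  moreover have "d i = (v i - v (i - 1)) / hh n" if "2 \<le> i" "i \<le> n" for i
    using mv_Dmat_interior[OF that] unfolding d_def .
  ultimately have "norminf n v + norminf n d \<le> 8 * F + (1024 * (K + 1)^2 + 2) * V"
    using norminf_add_norminf_le_of_step_bound[OF \<open>K \<ge> 0\<close> nK step \<open>\<And>i. e i \<ge> 0\<close>]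
    unfolding V_def by blast
  also have "\<dots> \<le> (16 / Th * (1 + Lb + Pb) + 1024 * (K + 1)^2 + 2) * (V + W)"
  proof -
    have "(16 / Th * (1 + Lb + Pb) + 1024 * (K + 1)^2 + 2) * (V + W)
        = 8 * F + (1024 * (K + 1)^2 + 2) * V + (16 / Th * (V + (Lb + Pb) * W) + (1024 * (K + 1)^2 + 2) * W)"
      unfolding F_def using Th by (simp add: field_simps)
    moreover have "0 \<le> 16 / Th * (V + (Lb + Pb) * W) + (1024 * (K + 1)^2 + 2) * W"
      using Th \<open>Lb \<ge> 0\<close> \<open>Pb \<ge> 0\<close> \<open>V \<ge> 0\<close> \<open>W \<ge> 0\<close> by simp
    ultimately show ?thesis
      by linarith
  qed
  finally show ?thesis
    unfolding d_def w_def K_def V_def W_def .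
qed

section \<open>Uniformity in the grid size\<close>

lemma norminf_add_norminf_mv_le:
  assumes "n \<ge> 1"
  shows "norminf n v + norminf n (mv n A v)
    \<le> (1 + (\<Sum>i=1..n. \<Sum>j=1..n. \<bar>A i j\<bar>)) / sqrt (hh n) * norm2d n v"
proof -
  define X where "X = norm2d n v / sqrt (hh n)"
  define S where "S = (\<Sum>i=1..n. \<Sum>j=1..n. \<bar>A i j\<bar>)"
  have "X \<ge> 0"
    unfolding X_def using norm2d_nonneg[of n v] hh_pos[of n] by (intro divide_nonneg_nonneg) auto
  have v: "\<bar>v j\<bar> \<le> X" if "j \<in> {1..n}" for j
    using abs_le_norm2d[OF that, of v] hh_pos[of n] unfolding X_def by (simp add: le_divide_eq mult.commute)
  have "norminf n (mv n A v) \<le> S * X"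
  proof (rule norminf_le[OF assms])
    fix i assume i: "i \<in> {1..n}"
    have "\<bar>mv n A v i\<bar> \<le> (\<Sum>j=1..n. \<bar>A i j\<bar> * \<bar>v j\<bar>)"
      unfolding mv_def abs_mult[symmetric] by (rule sum_abs)
    also have "\<dots> \<le> (\<Sum>j=1..n. \<bar>A i j\<bar>) * X"
      unfolding sum_distrib_right using v by (intro sum_mono mult_left_mono) auto
    also have "\<dots> \<le> S * X"
      unfolding S_def using i \<open>X \<ge> 0\<close> by (intro mult_right_mono member_le_sum) (auto intro: sum_nonneg)
    finally show "\<bar>mv n A v i\<bar> \<le> S * X" .
  qed
  moreover have "norminf n v \<le> X"
    using v by (rule norminf_le[OF assms])
  ultimately show ?thesis
    unfolding X_def S_def by (simp add: algebra_simps add_divide_distrib)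
qed

lemma eventually_boundary_weight_ge_half:
  assumes "a0 \<noteq> 0 \<or> b0 \<noteq> 0"
  shows "eventually (\<lambda>n. 1/2 \<le> boundary_weight a0 b0 n) sequentially"
proof (cases "a0 = 0")
  case True
  with assms have "boundary_weight a0 b0 n = 1" for n
    using hh_pos[of n] unfolding boundary_weight_def by simp
  then show ?thesis by simp
next
  case False
  have "(\<lambda>n. boundary_weight a0 b0 n) \<longlonglongrightarrow> 2 * (a0 - 0 * b0) / (3 * a0 - 2 * 0 * b0)"
    unfolding boundary_weight_def using False by (intro tendsto_intros LIMSEQ_hh) auto
  then have "(\<lambda>n. boundary_weight a0 b0 n) \<longlonglongrightarrow> 2/3"
    using False by simp
  then have "eventually (\<lambda>n. 1/2 < boundary_weight a0 b0 n) sequentially"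
    by (rule order_tendstoD) simp
  then show ?thesis
    by (rule eventually_mono) simp
qed

lemma uniform_constant_from_eventual:
  fixes L r R :: "nat \<Rightarrow> 'a \<Rightarrow> real"
  assumes large: "\<And>n x. 1 \<le> n \<Longrightarrow> N \<le> n \<Longrightarrow> L n x \<le> M * R n x"
    and each: "\<And>n x. 1 \<le> n \<Longrightarrow> L n x \<le> C n * r n x"
    and r: "\<And>n x. 0 \<le> r n x" "\<And>n x. r n x \<le> R n x"
  shows "\<exists>M'>0. \<forall>n\<ge>1. \<forall>x. L n x \<le> M' * R n x"
proof -
  define M' where "M' = \<bar>M\<bar> + (\<Sum>k<N. \<bar>C k\<bar>) + 1"
  have "M' > 0"
    unfolding M'_def by (simp add: add_nonneg_pos sum_nonneg)
  moreover have "L n x \<le> M' * R n x" if "1 \<le> n" for n x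
  proof (cases "N \<le> n")
    case True
    have "M \<le> M'"
      unfolding M'_def by (simp add: sum_nonneg add_increasing2)
    then show ?thesis
      using large[OF that True, of x] r[of n x] by (meson mult_right_mono order_trans)
  next
    case False
    have "C n \<le> \<bar>C n\<bar>" by simp
    also have "\<dots> \<le> (\<Sum>k<N. \<bar>C k\<bar>)"
      using False by (intro member_le_sum) auto
    also have "\<dots> \<le> M'"
      unfolding M'_def by simp
    finally have "L n x \<le> M' * r n x"
      using each[OF that, of x] r(1)[of n x] by (meson mult_right_mono order_trans)
    also have "\<dots> \<le> M' * R n x"
      using r(2) \<open>M' > 0\<close> by (simp add: mult_left_mono)
    finally show ?thesis .
  qed
  ultimately show ?thesis by blast
qed

lemma coefficient_bounds:
  fixes theta sig lam :: "real \<Rightarrow> real" and phi :: "real \<Rightarrow> real \<Rightarrow> real"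
  assumes "PC1 theta" "PC1 sig" "PC1 lam" "(INF x\<in>{0..1}. theta x) > 0" "C1_C1 phi"
  obtains Th Sb Lb Pb where "Th > 0" "\<forall>x\<in>{0..1}. Th \<le> theta x"
    "\<forall>x\<in>{0..1}. \<bar>sig x\<bar> \<le> Sb" "\<forall>x\<in>{0..1}. \<bar>lam x\<bar> \<le> Lb"
    "\<forall>x\<in>{0..1}. \<forall>t\<in>{0..1}. \<bar>phi x t\<bar> \<le> Pb"
proof -
  have "\<forall>x\<in>{0..1}. (INF x\<in>{0..1}. theta x) \<le> theta x"
    using bounded_imp_bdd_below[OF PC1_bounded[OF assms(1)]] by (auto intro: cINF_lower)
  moreover obtain Sb Lb where "\<forall>x\<in>{0..1}. \<bar>sig x\<bar> \<le> Sb" "\<forall>x\<in>{0..1}. \<bar>lam x\<bar> \<le> Lb"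
    using bounded_imageE[OF PC1_bounded[OF assms(2)]] bounded_imageE[OF PC1_bounded[OF assms(3)]]
    by metis
  moreover obtain Pb where "\<forall>x\<in>{0..1}. \<forall>t\<in>{0..1}. \<bar>phi x t\<bar> \<le> Pb"
    using C1_C1_bounded[OF assms(5)] by blast
  ultimately show ?thesis
    using that assms(4) by blast
qed

theorem lemma3:
  fixes theta sig lam :: "real \<Rightarrow> real" and phi :: "real \<Rightarrow> real \<Rightarrow> real"
    and a0 b0 a1 b1 :: real
  assumes "PC1 theta" and "PC1 sig" and "PC1 lam"
    and "(INF x\<in>{0..1}. theta x) > 0"
    and "C1_C1 phi"
    and "\<forall>n\<ge>1. 3 * a0 - 2 * hh n * b0 \<noteq> 0 \<and> 3 * a1 + 2 * hh n * b1 \<noteq> 0 \<and> a0 - hh n * b0 \<noteq> 0"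
  shows "\<exists>M>0. \<forall>n\<ge>1. \<forall>v :: nat \<Rightarrow> real.
           norminf n v + norminf n (mv n (Dmat a0 b0 n) v)
             \<le> M * (norm2d n v + norm2d n (mv n (Pmat theta sig lam phi a0 b0 a1 b1 n) v))"
proof -
  obtain Th Sb Lb Pb where Th: "Th > 0" "\<forall>x\<in>{0..1}. Th \<le> theta x"
    and Sb: "\<forall>x\<in>{0..1}. \<bar>sig x\<bar> \<le> Sb" and Lb: "\<forall>x\<in>{0..1}. \<bar>lam x\<bar> \<le> Lb"
    and Pb: "\<forall>x\<in>{0..1}. \<forall>t\<in>{0..1}. \<bar>phi x t\<bar> \<le> Pb"
    using coefficient_bounds[OF assms(1-5)] by blast
  have "a0 \<noteq> 0 \<or> b0 \<noteq> 0"
    using assms(6) by force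
  then obtain N where N: "\<And>n. N \<le> n \<Longrightarrow> 1/2 \<le> boundary_weight a0 b0 n"
    using eventually_boundary_weight_ge_half unfolding eventually_sequentially by blast
  show ?thesis
  proof (rule uniform_constant_from_eventual[where N = "max N (nat \<lceil>8 * (2 * Sb / Th + 1)\<rceil>)"
        and r = norm2d])
    fix n :: nat and v :: "nat \<Rightarrow> real"
    assume n: "1 \<le> n" "max N (nat \<lceil>8 * (2 * Sb / Th + 1)\<rceil>) \<le> n"
    then have "8 * (2 * Sb / Th + 1) \<le> real n + 1"
      using real_nat_ceiling_ge[of "8 * (2 * Sb / Th + 1)"] by linarith
    then show "norminf n v + norminf n (mv n (Dmat a0 b0 n) v)
        \<le> (16 / Th * (1 + Lb + Pb) + 1024 * (2 * Sb / Th + 1)^2 + 2)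
          * (norm2d n v + norm2d n (mv n (Pmat theta sig lam phi a0 b0 a1 b1 n) v))"
      using assms(6) n N by (intro stability_estimate_fine_grid[OF Th Sb Lb Pb]) auto
  qed (auto intro: norminf_add_norminf_mv_le simp: norm2d_nonneg)
qed

end
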